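(* Let $\mathbb{G}$ be a compact quantum group equipped with a proper length function $\ell:\operatorname{Irred}(\mathbb{G})\to\mathbb{N}_0$. Then $\bigl(F(\mathbb{G}),\ell^2(\operatorname{Irred}(\mathbb{G})),\tilde D_\ell\bigr)$ is a spectral triple: $\tilde D_\ell$ is self-adjoint with compact resolvent, and $[\tilde D_\ell,\pi(f)]$ is bounded for every $f\in F(\mathbb{G})$.
   Context: $\operatorname{Irred}(\mathbb{G})$: representatives of irreducible unitary corepresentations of the compact quantum group $\mathbb{G}$, with dimension $d(\alpha)$, trivial corepresentation $e$, conjugate $\bar\alpha$. A length function $\ell$ satisfies $\ell(e)=0$, $\ell(\bar\alpha)=\ell(\alpha)$, $\ell(\gamma)\le\ell(\alpha)+\ell(\beta)$ whenever $\gamma\subset\alpha\otimes\beta$; proper: $\ell^{-1}([0,N])$ finite for all $N$ and $\ell(\alpha)=0$ only for $\alpha=e$. The fusion algebra $F(\mathbb{G})$ has basis $\operatorname{Irred}(\mathbb{G})$ and product $\alpha\beta=\sum_\gamma N^\gamma_{\alpha,\beta}\gamma$ ($N^\gamma_{\alpha,\beta}$ = multiplicity of $\gamma$ in $\alpha\otimes\beta$). $\ell^2(\operatorname{Irred}(\mathbb{G}))$ is its completion with $\operatorname{Irred}(\mathbb{G})$ orthogonal and $\langle\alpha,\alpha\rangle=d(\alpha)^2$; $\pi(f)$ is the bounded extension of left multiplication by $f$. $\tilde D_\ell$ is the (closure of the) diagonal operator $\tilde D_\ell(\alpha)=\ell(\alpha)\alpha$. *)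

theory Defs
  imports "HOL-Analysis.Analysis"
begin

text \<open>Irred(G) is modelled by a type 'a. e = trivial corepresentation, cj = conjugation,
  d = dimension, N a b c = multiplicity of c in a (x) b.\<close>

definition cqg_fusion_data ::
  "'a \<Rightarrow> ('a \<Rightarrow> 'a) \<Rightarrow> ('a \<Rightarrow> nat) \<Rightarrow> ('a \<Rightarrow> 'a \<Rightarrow> 'a \<Rightarrow> nat) \<Rightarrow> bool" where
  "cqg_fusion_data e cj d N \<longleftrightarrow>
     (\<forall>a. d a \<ge> 1) \<and>
     (\<forall>a. cj (cj a) = a) \<and> cj e = e \<and>
     (\<forall>a. d (cj a) = d a) \<and>
     (\<forall>a b. finite {c. N a b c \<noteq> 0}) \<and>
     (\<forall>a c. N e a c = (if c = a then 1 else 0)) \<and>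
     (\<forall>a c. N a e c = (if c = a then 1 else 0)) \<and>
     (\<forall>a b. N a b e = (if b = cj a then 1 else 0)) \<and>
     (\<forall>a b c. N a b c = N (cj a) c b) \<and>
     (\<forall>a b c. N a b c = N c (cj b) a) \<and>
     (\<forall>a b. d a * d b = (\<Sum>c\<in>{c. N a b c \<noteq> 0}. N a b c * d c)) \<and>
     (\<forall>a b c y. (\<Sum>x\<in>{x. N a b x \<noteq> 0}. N a b x * N x c y) =
                 (\<Sum>x\<in>{x. N b c x \<noteq> 0}. N b c x * N a x y))"

definition length_function ::
  "'a \<Rightarrow> ('a \<Rightarrow> 'a) \<Rightarrow> ('a \<Rightarrow> 'a \<Rightarrow> 'a \<Rightarrow> nat) \<Rightarrow> ('a \<Rightarrow> nat) \<Rightarrow> bool" where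
  "length_function e cj N l \<longleftrightarrow>
     l e = 0 \<and> (\<forall>a. l (cj a) = l a) \<and>
     (\<forall>a b c. N a b c \<noteq> 0 \<longrightarrow> l c \<le> l a + l b)"

definition proper_length_function ::
  "'a \<Rightarrow> ('a \<Rightarrow> 'a) \<Rightarrow> ('a \<Rightarrow> 'a \<Rightarrow> 'a \<Rightarrow> nat) \<Rightarrow> ('a \<Rightarrow> nat) \<Rightarrow> bool" where
  "proper_length_function e cj N l \<longleftrightarrow>
     length_function e cj N l \<and>
     (\<forall>n. finite {a. l a \<le> n}) \<and> (\<forall>a. l a = 0 \<longrightarrow> a = e)"

text \<open>A vector is written by its coefficients x :: 'a => complex w.r.t. the orthogonal
  basis Irred(G), where <a,a> = d(a)^2.\<close>

definition l2 :: "('a \<Rightarrow> nat) \<Rightarrow> ('a \<Rightarrow> complex) set" where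
  "l2 d = {x. (\<lambda>a. (real (d a))\<^sup>2 * (cmod (x a))\<^sup>2) summable_on UNIV}"

definition l2_inner :: "('a \<Rightarrow> nat) \<Rightarrow> ('a \<Rightarrow> complex) \<Rightarrow> ('a \<Rightarrow> complex) \<Rightarrow> complex" where
  "l2_inner d x y = infsum (\<lambda>a. of_nat ((d a)\<^sup>2) * cnj (x a) * y a) UNIV"

definition l2_norm :: "('a \<Rightarrow> nat) \<Rightarrow> ('a \<Rightarrow> complex) \<Rightarrow> real" where
  "l2_norm d x = sqrt (infsum (\<lambda>a. (real (d a))\<^sup>2 * (cmod (x a))\<^sup>2) UNIV)"

definition dense_in_l2 :: "('a \<Rightarrow> nat) \<Rightarrow> ('a \<Rightarrow> complex) set \<Rightarrow> bool" where
  "dense_in_l2 d S \<longleftrightarrow> S \<subseteq> l2 d \<and>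
     (\<forall>x\<in>l2 d. \<forall>\<epsilon>>0. \<exists>y\<in>S. l2_norm d (x - y) < \<epsilon>)"

definition adjoint_graph ::
  "('a \<Rightarrow> nat) \<Rightarrow> ('a \<Rightarrow> complex) set \<Rightarrow> (('a \<Rightarrow> complex) \<Rightarrow> ('a \<Rightarrow> complex))
     \<Rightarrow> (('a \<Rightarrow> complex) \<times> ('a \<Rightarrow> complex)) set" where
  "adjoint_graph d S T = {(y, z). y \<in> l2 d \<and> z \<in> l2 d \<and>
      (\<forall>x\<in>S. l2_inner d (T x) y = l2_inner d x z)}"

definition self_adjoint ::
  "('a \<Rightarrow> nat) \<Rightarrow> ('a \<Rightarrow> complex) set \<Rightarrow> (('a \<Rightarrow> complex) \<Rightarrow> ('a \<Rightarrow> complex)) \<Rightarrow> bool" where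
  "self_adjoint d S T \<longleftrightarrow> dense_in_l2 d S \<and> (\<forall>x\<in>S. T x \<in> l2 d) \<and>
     adjoint_graph d S T = {(x, T x) | x. x \<in> S}"

definition compact_operator ::
  "('a \<Rightarrow> nat) \<Rightarrow> (('a \<Rightarrow> complex) \<Rightarrow> ('a \<Rightarrow> complex)) \<Rightarrow> bool" where
  "compact_operator d R \<longleftrightarrow> (\<forall>x\<in>l2 d. R x \<in> l2 d) \<and>
     (\<forall>(xs :: nat \<Rightarrow> 'a \<Rightarrow> complex) B. (\<forall>n. xs n \<in> l2 d \<and> l2_norm d (xs n) \<le> B) \<longrightarrow>
        (\<exists>r z. strict_mono r \<and> z \<in> l2 d \<and>
               (\<lambda>n. l2_norm d (R (xs (r n)) - z)) \<longlonglongrightarrow> 0))"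

definition has_compact_resolvent ::
  "('a \<Rightarrow> nat) \<Rightarrow> ('a \<Rightarrow> complex) set \<Rightarrow> (('a \<Rightarrow> complex) \<Rightarrow> ('a \<Rightarrow> complex)) \<Rightarrow> bool" where
  "has_compact_resolvent d S T \<longleftrightarrow>
     (\<exists>R. (\<forall>y\<in>l2 d. R y \<in> S \<and> (\<lambda>a. T (R y) a - \<i> * R y a) = y) \<and>
          (\<forall>x\<in>S. R (\<lambda>a. T x a - \<i> * x a) = x) \<and>
          compact_operator d R)"

definition bounded_commutator ::
  "('a \<Rightarrow> nat) \<Rightarrow> ('a \<Rightarrow> complex) set \<Rightarrow> (('a \<Rightarrow> complex) \<Rightarrow> ('a \<Rightarrow> complex))
     \<Rightarrow> (('a \<Rightarrow> complex) \<Rightarrow> ('a \<Rightarrow> complex)) \<Rightarrow> bool" where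
  "bounded_commutator d S T P \<longleftrightarrow> (\<forall>x\<in>S. P x \<in> S) \<and>
     (\<exists>C. \<forall>x\<in>S. l2_norm d (T (P x) - P (T x)) \<le> C * l2_norm d x)"

definition closure_graph ::
  "('a \<Rightarrow> nat) \<Rightarrow> ('a \<Rightarrow> complex) set \<Rightarrow> (('a \<Rightarrow> complex) \<Rightarrow> ('a \<Rightarrow> complex))
     \<Rightarrow> (('a \<Rightarrow> complex) \<times> ('a \<Rightarrow> complex)) set" where
  "closure_graph d S T = {(x, y). x \<in> l2 d \<and> y \<in> l2 d \<and>
     (\<exists>xs :: nat \<Rightarrow> 'a \<Rightarrow> complex. (\<forall>n. xs n \<in> S) \<and> (\<lambda>n. l2_norm d (xs n - x)) \<longlonglongrightarrow> 0 \<and>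
           (\<lambda>n. l2_norm d (T (xs n) - y)) \<longlonglongrightarrow> 0)}"

definition fin_supp :: "('a \<Rightarrow> complex) set" where
  "fin_supp = {x. finite {a. x a \<noteq> 0}}"

text \<open>F(G): finite linear combinations of elements of Irred(G).\<close>
abbreviation fusion_algebra :: "('a \<Rightarrow> complex) set" where
  "fusion_algebra \<equiv> fin_supp"

text \<open>pi(f): left multiplication by f, c-th coefficient of f * x.  On finitely supported x
  this is left multiplication in F(G); the same coordinatewise formula (a finite sum for
  each c) gives its bounded extension to l^2.\<close>
definition fusion_pi ::
  "('a \<Rightarrow> 'a \<Rightarrow> 'a \<Rightarrow> nat) \<Rightarrow> ('a \<Rightarrow> complex) \<Rightarrow> ('a \<Rightarrow> complex) \<Rightarrow> ('a \<Rightarrow> complex)" where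
  "fusion_pi N f x = (\<lambda>c. \<Sum>a\<in>{a. f a \<noteq> 0}. f a *
      (\<Sum>b\<in>{b. N a b c \<noteq> 0}. of_nat (N a b c) * x b))"

definition diag_op :: "('a \<Rightarrow> nat) \<Rightarrow> ('a \<Rightarrow> complex) \<Rightarrow> ('a \<Rightarrow> complex)" where
  "diag_op l x = (\<lambda>a. of_nat (l a) * x a)"

definition Dt_dom :: "('a \<Rightarrow> nat) \<Rightarrow> ('a \<Rightarrow> nat) \<Rightarrow> ('a \<Rightarrow> complex) set" where
  "Dt_dom d l = Domain (closure_graph d fin_supp (diag_op l))"

definition Dt :: "('a \<Rightarrow> nat) \<Rightarrow> ('a \<Rightarrow> nat) \<Rightarrow> ('a \<Rightarrow> complex) \<Rightarrow> ('a \<Rightarrow> complex)" where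
  "Dt d l x = (THE y. (x, y) \<in> closure_graph d fin_supp (diag_op l))"

end

theory Submission
  imports Defs "HOL-Library.Diagonal_Subsequence"
begin

(* Since Irred(G) is an orthogonal basis of eigenvectors of D_l and the sublevel sets of l are
   finite, truncating a vector to {l <= n} approximates it in the graph norm of the diagonal
   operator.  Hence the closure of D_l on F(G) is the maximal multiplication operator by l,
   which is self-adjoint, and its resolvent (D_l - i)^-1 is multiplication by 1/(l - i); this
   multiplier vanishes at infinity, so the resolvent is compact (diagonal argument on the
   countable basis).  For f = alpha, the commutator [D_l, pi(alpha)] has matrix entries
   N(alpha,beta,gamma) (l gamma - l beta), and Frobenius reciprocity with the triangle inequality
   for l bounds these by l(alpha) N(alpha,beta,gamma).  A Schur test with the dimensions as
   weights shows that the matrix N(alpha,-,-) has norm at most d(alpha)^2 on l^2(Irred G). *)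

section \<open>The weighted sequence space\<close>

definition l2_term :: "('a \<Rightarrow> nat) \<Rightarrow> ('a \<Rightarrow> complex) \<Rightarrow> 'a \<Rightarrow> real" where
  "l2_term d x a = (real (d a))\<^sup>2 * (cmod (x a))\<^sup>2"

(* The infinite sum is 0 outside l2 d, so bounds on l2_normsq come paired with membership. *)
definition l2_normsq :: "('a \<Rightarrow> nat) \<Rightarrow> ('a \<Rightarrow> complex) \<Rightarrow> real" where
  "l2_normsq d x = infsum (l2_term d x) UNIV"

lemma mem_l2_iff: "x \<in> l2 d \<longleftrightarrow> l2_term d x summable_on UNIV"
  by (simp add: l2_def l2_term_def[abs_def])

lemma l2_norm_eq_sqrt: "l2_norm d x = sqrt (l2_normsq d x)"
  by (simp add: l2_norm_def l2_normsq_def l2_term_def[abs_def])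

lemma l2_term_nonneg: "l2_term d x a \<ge> 0"
  by (simp add: l2_term_def)

lemma l2_normsq_nonneg: "l2_normsq d x \<ge> 0"
  unfolding l2_normsq_def by (rule infsum_nonneg) (rule l2_term_nonneg)

lemma sum_l2_term_le_l2_normsq:
  assumes "x \<in> l2 d" and "finite F"
  shows "sum (l2_term d x) F \<le> l2_normsq d x"
  unfolding l2_normsq_def
  using assms by (intro finite_sum_le_infsum) (auto simp: mem_l2_iff l2_term_nonneg)

lemma l2_if_sum_l2_term_bounded:
  assumes "\<And>F. finite F \<Longrightarrow> sum (l2_term d x) F \<le> C"
  shows "x \<in> l2 d \<and> l2_normsq d x \<le> C"
proof -
  have "l2_term d x summable_on UNIV"
    using assms by (intro nonneg_bdd_above_summable_on) (auto simp: l2_term_nonneg bdd_above_def)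
  then show ?thesis
    unfolding mem_l2_iff l2_normsq_def using assms by (auto intro: infsum_le_finite_sums)
qed

lemma l2_pointwise_le:
  assumes x: "x \<in> l2 d" and le: "\<And>a. cmod (y a) \<le> c * cmod (x a)"
  shows "y \<in> l2 d \<and> l2_normsq d y \<le> c\<^sup>2 * l2_normsq d x"
proof (rule l2_if_sum_l2_term_bounded)
  fix F :: "'a set" assume F: "finite F"
  have "l2_term d y a \<le> c\<^sup>2 * l2_term d x a" for a
  proof -
    have "(cmod (y a))\<^sup>2 \<le> (c * cmod (x a))\<^sup>2"
      using le[of a] norm_ge_zero[of "y a"] by (intro power_mono) auto
    from mult_left_mono[OF this, of "(real (d a))\<^sup>2"] show ?thesis
      unfolding l2_term_def by (simp add: power_mult_distrib ac_simps)
  qed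
  then have "sum (l2_term d y) F \<le> c\<^sup>2 * sum (l2_term d x) F"
    by (simp add: sum_distrib_left sum_mono)
  also have "\<dots> \<le> c\<^sup>2 * l2_normsq d x"
    by (simp add: mult_left_mono sum_l2_term_le_l2_normsq[OF x F])
  finally show "sum (l2_term d y) F \<le> c\<^sup>2 * l2_normsq d x" .
qed

lemma l2_sum_le:
  assumes A: "finite A" and g: "\<And>i. i \<in> A \<Longrightarrow> g i \<in> l2 d"
    and le: "\<And>a. cmod (y a) \<le> (\<Sum>i\<in>A. cmod (g i a))"
  shows "y \<in> l2 d \<and> l2_normsq d y \<le> real (card A) * (\<Sum>i\<in>A. l2_normsq d (g i))"
proof (rule l2_if_sum_l2_term_bounded)
  fix F :: "'b set" assume F: "finite F"
  have "l2_term d y a \<le> real (card A) * (\<Sum>i\<in>A. l2_term d (g i) a)" for a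
  proof -
    have "(cmod (y a))\<^sup>2 \<le> (\<Sum>i\<in>A. 1 * cmod (g i a))\<^sup>2"
      using le[of a] by (intro power_mono) auto
    also have "\<dots> \<le> (\<Sum>i\<in>A. 1\<^sup>2) * (\<Sum>i\<in>A. (cmod (g i a))\<^sup>2)"
      by (rule Cauchy_Schwarz_ineq_sum)
    finally have "(cmod (y a))\<^sup>2 \<le> real (card A) * (\<Sum>i\<in>A. (cmod (g i a))\<^sup>2)" by simp
    from mult_left_mono[OF this, of "(real (d a))\<^sup>2"] show ?thesis
      unfolding l2_term_def sum_distrib_left[symmetric] by (simp add: ac_simps)
  qed
  then have "sum (l2_term d y) F \<le> real (card A) * (\<Sum>i\<in>A. sum (l2_term d (g i)) F)"
    by (simp add: sum_distrib_left sum_mono sum.swap[of _ F])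
  also have "\<dots> \<le> real (card A) * (\<Sum>i\<in>A. l2_normsq d (g i))"
    using g F by (intro mult_left_mono sum_mono sum_l2_term_le_l2_normsq) auto
  finally show "sum (l2_term d y) F \<le> real (card A) * (\<Sum>i\<in>A. l2_normsq d (g i))" .
qed

lemma l2_triangle_le:
  assumes "x \<in> l2 d" and "y \<in> l2 d" and "\<And>a. cmod (z a) \<le> cmod (x a) + cmod (y a)"
  shows "z \<in> l2 d \<and> l2_normsq d z \<le> 2 * (l2_normsq d x + l2_normsq d y)"
  using l2_sum_le[of "{True, False}" "\<lambda>i. if i then x else y" d z] assms by simp

lemma l2_add: "x \<in> l2 d \<Longrightarrow> y \<in> l2 d \<Longrightarrow> (\<lambda>a. x a + y a) \<in> l2 d"
  using l2_triangle_le[of x d y "\<lambda>a. x a + y a"] by (simp add: norm_triangle_ineq)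

lemma l2_diff:
  "x \<in> l2 d \<Longrightarrow> y \<in> l2 d \<Longrightarrow> x - y \<in> l2 d \<and> l2_normsq d (x - y) \<le> 2 * (l2_normsq d x + l2_normsq d y)"
  by (rule l2_triangle_le) (simp_all add: norm_triangle_ineq4)

lemma cmod_le_l2_norm:
  assumes "x \<in> l2 d" and "d a \<ge> 1"
  shows "cmod (x a) \<le> l2_norm d x"
proof -
  have "(cmod (x a))\<^sup>2 \<le> l2_term d x a"
    using assms(2) unfolding l2_term_def by (simp add: mult_le_cancel_right1)
  also have "\<dots> \<le> l2_normsq d x"
    using sum_l2_term_le_l2_normsq[OF assms(1), of "{a}"] by simp
  finally show ?thesis unfolding l2_norm_eq_sqrt by (rule real_le_rsqrt)
qed

lemma fin_supp_subset_l2: "fin_supp \<subseteq> l2 d"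
proof
  fix x :: "'a \<Rightarrow> complex" assume "x \<in> fin_supp"
  then have "finite {a. x a \<noteq> 0}" by (simp add: fin_supp_def)
  then have "finite {a. l2_term d x a \<noteq> 0}"
    by (rule rev_finite_subset) (auto simp: l2_term_def)
  then show "x \<in> l2 d"
    unfolding mem_l2_iff by (intro finite_nonzero_values_imp_summable_on) simp
qed

lemma tendsto_coordinate_if_l2_norm_tendsto:
  assumes "\<And>n. x n \<in> l2 d" and "y \<in> l2 d" and "d a \<ge> 1"
    and "(\<lambda>n. l2_norm d (x n - y)) \<longlonglongrightarrow> 0"
  shows "(\<lambda>n. x n a) \<longlonglongrightarrow> y a"
proof -
  have "norm (x n a - y a) \<le> l2_norm d (x n - y)" for n
    using cmod_le_l2_norm[OF l2_diff[OF assms(1,2), THEN conjunct1] assms(3)] by simp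
  then have "(\<lambda>n. x n a - y a) \<longlonglongrightarrow> 0"
    by (intro Lim_null_comparison[OF _ assms(4)]) simp
  then show ?thesis by (rule LIM_zero_cancel)
qed

section \<open>The closure of the diagonal operator\<close>

definition trunc :: "('a \<Rightarrow> nat) \<Rightarrow> nat \<Rightarrow> ('a \<Rightarrow> complex) \<Rightarrow> 'a \<Rightarrow> complex" where
  "trunc l n x = (\<lambda>a. if l a \<le> n then x a else 0)"

lemma trunc_in_fin_supp: "finite {a. l a \<le> n} \<Longrightarrow> trunc l n x \<in> fin_supp"
  unfolding fin_supp_def trunc_def by (auto elim: rev_finite_subset)

lemma filterlim_sublevels_finite_subsets_at_top:
  fixes l :: "'a \<Rightarrow> nat"
  assumes fin: "\<And>n. finite {a. l a \<le> n}"
  shows "filterlim (\<lambda>n. {a. l a \<le> n}) (finite_subsets_at_top UNIV) sequentially"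
  unfolding filterlim_finite_subsets_at_top eventually_sequentially
proof (intro allI impI)
  fix X :: "'a set" assume "finite X \<and> X \<subseteq> UNIV"
  then have "l a \<le> Max (l ` X)" if "a \<in> X" for a
    using that by simp
  then have "X \<subseteq> {a. l a \<le> n}" if "Max (l ` X) \<le> n" for n
    using that by force
  then show "\<exists>N. \<forall>n\<ge>N. finite {a. l a \<le> n} \<and> X \<subseteq> {a. l a \<le> n} \<and> {a. l a \<le> n} \<subseteq> UNIV"
    using fin by blast
qed

lemma l2_norm_trunc_diff_tendsto:
  assumes fin: "\<And>n. finite {a. l a \<le> n}" and x: "x \<in> l2 d"
  shows "(\<lambda>n. l2_norm d (trunc l n x - x)) \<longlonglongrightarrow> 0"
proof -
  define L where "L n = {a. l a \<le> n}" for n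
  have tail: "l2_normsq d (trunc l n x - x) \<le> l2_normsq d x - sum (l2_term d x) (L n)" for n
  proof (rule l2_if_sum_l2_term_bounded[THEN conjunct2])
    fix G :: "'a set" assume G: "finite G"
    have "sum (l2_term d (trunc l n x - x)) G = sum (l2_term d x) (G - L n)"
      by (rule sum.mono_neutral_cong_right) (auto simp: G L_def trunc_def l2_term_def)
    moreover have "sum (l2_term d x) (G - L n) + sum (l2_term d x) (L n)
        = sum (l2_term d x) ((G - L n) \<union> L n)"
      by (rule sum.union_disjoint[symmetric]) (auto simp: G fin L_def)
    moreover have "sum (l2_term d x) ((G - L n) \<union> L n) \<le> l2_normsq d x"
      by (rule sum_l2_term_le_l2_normsq[OF x]) (simp add: G fin L_def)
    ultimately show "sum (l2_term d (trunc l n x - x)) G \<le> l2_normsq d x - sum (l2_term d x) (L n)"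
      by linarith
  qed
  have "filterlim L (finite_subsets_at_top UNIV) sequentially"
    unfolding L_def by (rule filterlim_sublevels_finite_subsets_at_top[OF fin])
  moreover have "(l2_term d x has_sum l2_normsq d x) UNIV"
    using x by (simp add: mem_l2_iff l2_normsq_def)
  ultimately have sums: "(\<lambda>n. sum (l2_term d x) (L n)) \<longlonglongrightarrow> l2_normsq d x"
    unfolding has_sum_def by (rule filterlim_compose[rotated])
  have tails: "(\<lambda>n. l2_normsq d x - sum (l2_term d x) (L n)) \<longlonglongrightarrow> 0"
    using tendsto_diff[OF tendsto_const sums, of "l2_normsq d x"] by simp
  have "(\<lambda>n. l2_normsq d (trunc l n x - x)) \<longlonglongrightarrow> 0"
  proof (rule tendsto_sandwich[OF _ _ tendsto_const tails])
    show "\<forall>\<^sub>F n in sequentially. 0 \<le> l2_normsq d (trunc l n x - x)"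
      by (simp add: l2_normsq_nonneg)
    show "\<forall>\<^sub>F n in sequentially. l2_normsq d (trunc l n x - x) \<le> l2_normsq d x - sum (l2_term d x) (L n)"
      by (simp add: tail)
  qed
  from tendsto_real_sqrt[OF this] show ?thesis
    by (simp add: l2_norm_eq_sqrt)
qed

lemma diag_op_trunc: "diag_op l (trunc l n x) = trunc l n (diag_op l x)"
  by (auto simp: diag_op_def trunc_def)

lemma diag_op_in_fin_supp: "x \<in> fin_supp \<Longrightarrow> diag_op l x \<in> fin_supp"
  unfolding fin_supp_def diag_op_def by (auto elim: rev_finite_subset)

lemma closure_graph_diag_op:
  assumes d: "\<And>a. d a \<ge> 1" and fin: "\<And>n. finite {a. l a \<le> n}"
  shows "closure_graph d fin_supp (diag_op l) = {(x, diag_op l x) | x. x \<in> l2 d \<and> diag_op l x \<in> l2 d}"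
proof (intro set_eqI iffI)
  fix p assume "p \<in> closure_graph d fin_supp (diag_op l)"
  then obtain x y xs where p: "p = (x, y)" and x: "x \<in> l2 d" and y: "y \<in> l2 d"
    and xs: "\<And>n. xs n \<in> fin_supp"
    and lim_x: "(\<lambda>n. l2_norm d (xs n - x)) \<longlonglongrightarrow> 0"
    and lim_y: "(\<lambda>n. l2_norm d (diag_op l (xs n) - y)) \<longlonglongrightarrow> 0"
    unfolding closure_graph_def by blast
  have "y = diag_op l x"
  proof (rule ext, rule LIMSEQ_unique)
    fix a
    show "(\<lambda>n. diag_op l (xs n) a) \<longlonglongrightarrow> y a"
      using xs fin_supp_subset_l2 diag_op_in_fin_supp
      by (intro tendsto_coordinate_if_l2_norm_tendsto[OF _ y d lim_y]) blast
    have "(\<lambda>n. xs n a) \<longlonglongrightarrow> x a"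
      using xs fin_supp_subset_l2 by (intro tendsto_coordinate_if_l2_norm_tendsto[OF _ x d lim_x]) blast
    then show "(\<lambda>n. diag_op l (xs n) a) \<longlonglongrightarrow> diag_op l x a"
      unfolding diag_op_def by (rule tendsto_mult_left)
  qed
  then show "p \<in> {(x, diag_op l x) | x. x \<in> l2 d \<and> diag_op l x \<in> l2 d}"
    using p x y by simp
next
  fix p assume "p \<in> {(x, diag_op l x) | x. x \<in> l2 d \<and> diag_op l x \<in> l2 d}"
  then obtain x where p: "p = (x, diag_op l x)" and x: "x \<in> l2 d" and dx: "diag_op l x \<in> l2 d"
    by blast
  have "\<exists>xs. (\<forall>n. xs n \<in> fin_supp) \<and> (\<lambda>n. l2_norm d (xs n - x)) \<longlonglongrightarrow> 0 \<and>
      (\<lambda>n. l2_norm d (diag_op l (xs n) - diag_op l x)) \<longlonglongrightarrow> 0"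
  proof (intro exI conjI allI)
    show "trunc l n x \<in> fin_supp" for n
      by (rule trunc_in_fin_supp[OF fin])
    show "(\<lambda>n. l2_norm d (trunc l n x - x)) \<longlonglongrightarrow> 0"
      by (rule l2_norm_trunc_diff_tendsto[OF fin x])
    show "(\<lambda>n. l2_norm d (diag_op l (trunc l n x) - diag_op l x)) \<longlonglongrightarrow> 0"
      unfolding diag_op_trunc by (rule l2_norm_trunc_diff_tendsto[OF fin dx])
  qed
  then show "p \<in> closure_graph d fin_supp (diag_op l)"
    unfolding closure_graph_def p using x dx by simp
qed

lemma Dt_dom_eq:
  assumes "\<And>a. d a \<ge> 1" and "\<And>n. finite {a. l a \<le> n}"
  shows "Dt_dom d l = {x \<in> l2 d. diag_op l x \<in> l2 d}"
proof -
  have "Dt_dom d l = Domain {(x, diag_op l x) | x. x \<in> l2 d \<and> diag_op l x \<in> l2 d}"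
    unfolding Dt_dom_def closure_graph_diag_op[OF assms] ..
  also have "\<dots> = {x \<in> l2 d. diag_op l x \<in> l2 d}"
    by auto
  finally show ?thesis .
qed

lemma Dt_eq_diag_op:
  assumes "\<And>a. d a \<ge> 1" and "\<And>n. finite {a. l a \<le> n}" and "x \<in> Dt_dom d l"
  shows "Dt d l x = diag_op l x"
  unfolding Dt_def closure_graph_diag_op[OF assms(1,2)]
proof (rule the_equality)
  show "(x, diag_op l x) \<in> {(x, diag_op l x) | x. x \<in> l2 d \<and> diag_op l x \<in> l2 d}"
    using assms(3) by (simp add: Dt_dom_eq[OF assms(1,2)])
qed simp

lemma l2_norm_diff_commute: "l2_norm d (x - y) = l2_norm d (y - x)"
  by (simp add: l2_norm_def norm_minus_commute)

lemma dense_in_l2_Dt_dom: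
  assumes d: "\<And>a. d a \<ge> 1" and fin: "\<And>n. finite {a. l a \<le> n}"
  shows "dense_in_l2 d (Dt_dom d l)"
  unfolding dense_in_l2_def
proof (intro conjI ballI allI impI)
  show "Dt_dom d l \<subseteq> l2 d"
    unfolding Dt_dom_eq[OF d fin] by blast
  fix x :: "'a \<Rightarrow> complex" and \<epsilon> :: real
  assume x: "x \<in> l2 d" and \<epsilon>: "\<epsilon> > 0"
  obtain n where n: "l2_norm d (trunc l n x - x) < \<epsilon>"
    using order_tendstoD(2)[OF l2_norm_trunc_diff_tendsto[OF fin x] \<epsilon>] eventually_sequentially
    by auto
  have "trunc l n x \<in> Dt_dom d l"
    using trunc_in_fin_supp[OF fin] fin_supp_subset_l2 diag_op_in_fin_supp
    unfolding Dt_dom_eq[OF d fin] by blast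
  with n show "\<exists>y\<in>Dt_dom d l. l2_norm d (x - y) < \<epsilon>"
    by (auto simp: l2_norm_diff_commute)
qed

lemma l2_inner_single_left:
  assumes "\<And>b. b \<noteq> a \<Longrightarrow> x b = 0"
  shows "l2_inner d x y = of_nat ((d a)\<^sup>2) * cnj (x a) * y a"
proof -
  have "l2_inner d x y = infsum (\<lambda>b. of_nat ((d b)\<^sup>2) * cnj (x b) * y b) {a}"
    unfolding l2_inner_def by (rule infsum_cong_neutral) (use assms in auto)
  then show ?thesis by simp
qed

lemma l2_inner_diag_op: "l2_inner d (diag_op l x) y = l2_inner d x (diag_op l y)"
  unfolding l2_inner_def diag_op_def by (simp add: ac_simps)

lemma adjoint_graph_Dt:
  assumes d: "\<And>a. d a \<ge> 1" and fin: "\<And>n. finite {a. l a \<le> n}"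
  shows "adjoint_graph d (Dt_dom d l) (Dt d l) = {(x, Dt d l x) | x. x \<in> Dt_dom d l}"
proof (intro set_eqI iffI)
  note dom = Dt_dom_eq[OF d fin] and Dt = Dt_eq_diag_op[OF d fin]
  fix p assume "p \<in> adjoint_graph d (Dt_dom d l) (Dt d l)"
  then obtain y z where p: "p = (y, z)" and y: "y \<in> l2 d" and z: "z \<in> l2 d"
    and adj: "\<And>x. x \<in> Dt_dom d l \<Longrightarrow> l2_inner d (Dt d l x) y = l2_inner d x z"
    unfolding adjoint_graph_def by auto
  have z_eq: "z = diag_op l y"
  proof
    fix a :: 'a
    define \<delta> where "\<delta> = (\<lambda>b. if b = a then (1::complex) else 0)"
    have "\<delta> \<in> fin_supp"
      by (simp add: fin_supp_def \<delta>_def)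
    then have \<delta>: "\<delta> \<in> Dt_dom d l"
      using fin_supp_subset_l2 diag_op_in_fin_supp unfolding dom by blast
    have "of_nat ((d a)\<^sup>2) * diag_op l y a = l2_inner d (Dt d l \<delta>) y"
      unfolding Dt[OF \<delta>] by (subst l2_inner_single_left[of a]) (simp_all add: \<delta>_def diag_op_def)
    also have "\<dots> = l2_inner d \<delta> z"
      by (rule adj[OF \<delta>])
    also have "\<dots> = of_nat ((d a)\<^sup>2) * z a"
      by (subst l2_inner_single_left[of a]) (simp_all add: \<delta>_def)
    finally show "z a = diag_op l y a"
      using d[of a] by simp
  qed
  then have "y \<in> Dt_dom d l" and "z = Dt d l y"
    using y z by (simp_all add: dom Dt)
  then show "p \<in> {(x, Dt d l x) | x. x \<in> Dt_dom d l}"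
    using p by simp
next
  note dom = Dt_dom_eq[OF d fin] and Dt = Dt_eq_diag_op[OF d fin]
  fix p assume "p \<in> {(x, Dt d l x) | x. x \<in> Dt_dom d l}"
  then obtain y where p: "p = (y, Dt d l y)" and y: "y \<in> Dt_dom d l"
    by blast
  have "l2_inner d (Dt d l x) y = l2_inner d x (Dt d l y)" if "x \<in> Dt_dom d l" for x
    by (simp add: Dt[OF that] Dt[OF y] l2_inner_diag_op)
  then show "p \<in> adjoint_graph d (Dt_dom d l) (Dt d l)"
    using y unfolding adjoint_graph_def p by (simp add: dom Dt)
qed

lemma self_adjoint_Dt:
  assumes "\<And>a. d a \<ge> 1" and "\<And>n. finite {a. l a \<le> n}"
  shows "self_adjoint d (Dt_dom d l) (Dt d l)"
  unfolding self_adjoint_def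
  using dense_in_l2_Dt_dom[OF assms] adjoint_graph_Dt[OF assms]
    Dt_dom_eq[OF assms] Dt_eq_diag_op[OF assms] by simp

section \<open>Compactness of the resolvent\<close>

definition mult_op :: "('a \<Rightarrow> complex) \<Rightarrow> ('a \<Rightarrow> complex) \<Rightarrow> 'a \<Rightarrow> complex" where
  "mult_op m x = (\<lambda>a. m a * x a)"

lemma pointwise_convergent_subseq:
  fixes xs :: "nat \<Rightarrow> 'a \<Rightarrow> 'b::heine_borel"
  assumes cnt: "countable (UNIV :: 'a set)" and bnd: "\<And>a. bounded (range (\<lambda>n. xs n a))"
  shows "\<exists>r. strict_mono r \<and> (\<forall>a. convergent (\<lambda>n. xs (r n) a))"
proof -
  define P where "P k s \<longleftrightarrow> convergent (\<lambda>n. xs (s n) (from_nat_into UNIV k))" for k and s :: "nat \<Rightarrow> nat"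
  interpret subseqs P
  proof
    fix k and s :: "nat \<Rightarrow> nat" assume "strict_mono s"
    have "bounded (range (\<lambda>n. xs (s n) (from_nat_into UNIV k)))"
      using bnd by (rule bounded_subset) auto
    then obtain r L where "strict_mono r" "((\<lambda>n. xs (s n) (from_nat_into UNIV k)) \<circ> r) \<longlonglongrightarrow> L"
      using bounded_imp_convergent_subsequence by blast
    then show "\<exists>r. strict_mono r \<and> P k (s \<circ> r)"
      unfolding P_def convergent_def by (auto simp: o_def)
  qed
  have "convergent (\<lambda>n. xs (diagseq n) a)" for a
  proof -
    obtain k where k: "from_nat_into UNIV k = a"
      using from_nat_into_surj[OF cnt] by blast
    have "P k (diagseq \<circ> (+) (Suc k))"
    proof (rule diagseq_holds)
      fix r s n assume "strict_mono (r :: nat \<Rightarrow> nat)" "P n s"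
      then show "P n (s \<circ> r)"
        unfolding P_def convergent_def using LIMSEQ_subseq_LIMSEQ by (fastforce simp: o_def)
    qed
    then have "convergent (\<lambda>n. xs (diagseq (n + Suc k)) a)"
      by (simp add: P_def k o_def add.commute)
    then obtain L where "(\<lambda>n. xs (diagseq (n + Suc k)) a) \<longlonglongrightarrow> L"
      unfolding convergent_def by blast
    then show ?thesis
      unfolding convergent_def by (blast intro: LIMSEQ_offset)
  qed
  then show ?thesis
    using subseq_diagseq by blast
qed

lemma l2_pointwise_limit:
  assumes x: "\<And>n. x n \<in> l2 d" and bnd: "\<And>n. l2_normsq d (x n) \<le> C"
    and lim: "\<And>a. (\<lambda>n. x n a) \<longlonglongrightarrow> u a"
  shows "u \<in> l2 d \<and> l2_normsq d u \<le> C"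
proof (rule l2_if_sum_l2_term_bounded)
  fix F :: "'a set" assume F: "finite F"
  have "(\<lambda>n. sum (l2_term d (x n)) F) \<longlonglongrightarrow> sum (l2_term d u) F"
    unfolding l2_term_def by (intro tendsto_intros lim)
  moreover have "sum (l2_term d (x n)) F \<le> C" for n
    using sum_l2_term_le_l2_normsq[OF x F] bnd order_trans by blast
  ultimately show "sum (l2_term d u) F \<le> C"
    by (intro LIMSEQ_le_const2) auto
qed

lemma l2_normsq_mult_op_le:
  assumes x: "x \<in> l2 d" and F: "finite F" and small: "\<And>a. a \<notin> F \<Longrightarrow> cmod (m a) \<le> \<epsilon>"
  shows "mult_op m x \<in> l2 d \<and>
    l2_normsq d (mult_op m x) \<le> sum (l2_term d (mult_op m x)) F + \<epsilon>\<^sup>2 * l2_normsq d x"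
proof (rule l2_if_sum_l2_term_bounded)
  fix G :: "'a set" assume G: "finite G"
  have outside: "l2_term d (mult_op m x) a \<le> \<epsilon>\<^sup>2 * l2_term d x a" if "a \<notin> F" for a
  proof -
    have "(cmod (m a))\<^sup>2 \<le> \<epsilon>\<^sup>2"
      using small[OF that] by (intro power_mono) auto
    from mult_right_mono[OF this, of "l2_term d x a"] show ?thesis
      by (simp add: l2_term_def mult_op_def norm_mult power_mult_distrib l2_term_nonneg ac_simps)
  qed
  have "sum (l2_term d (mult_op m x)) G
      = sum (l2_term d (mult_op m x)) (G \<inter> F) + sum (l2_term d (mult_op m x)) (G - F)"
    using G by (metis sum.Int_Diff)
  also have "\<dots> \<le> sum (l2_term d (mult_op m x)) F + \<epsilon>\<^sup>2 * sum (l2_term d x) (G - F)"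
    using F outside
    by (intro add_mono sum_mono2) (auto simp: l2_term_nonneg sum_distrib_left intro: sum_mono)
  also have "\<dots> \<le> sum (l2_term d (mult_op m x)) F + \<epsilon>\<^sup>2 * l2_normsq d x"
    using G by (intro add_left_mono mult_left_mono sum_l2_term_le_l2_normsq[OF x]) auto
  finally show "sum (l2_term d (mult_op m x)) G
      \<le> sum (l2_term d (mult_op m x)) F + \<epsilon>\<^sup>2 * l2_normsq d x" .
qed

lemma l2_normsq_mult_op_tendsto_zero:
  assumes vanish: "\<And>\<epsilon>. \<epsilon> > 0 \<Longrightarrow> finite {a. \<epsilon> \<le> cmod (m a)}"
    and v: "\<And>n. v n \<in> l2 d" and bnd: "\<And>n. l2_normsq d (v n) \<le> K"
    and lim: "\<And>a. (\<lambda>n. v n a) \<longlonglongrightarrow> 0"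
  shows "(\<lambda>n. l2_normsq d (mult_op m (v n))) \<longlonglongrightarrow> 0"
proof (rule LIMSEQ_I)
  fix \<epsilon> :: real assume \<epsilon>: "\<epsilon> > 0"
  define c where "c = \<bar>K\<bar> + 1"
  define \<delta> where "\<delta> = sqrt (\<epsilon> / 2 / c)"
  define F where "F = {a. \<delta> \<le> cmod (m a)}"
  have c: "c > 0"
    unfolding c_def by (rule add_nonneg_pos) auto
  have \<delta>: "\<delta> > 0"
    using \<epsilon> c by (simp add: \<delta>_def)
  have \<delta>_sq: "\<delta>\<^sup>2 = \<epsilon> / 2 / c"
    unfolding \<delta>_def using \<epsilon> c by (intro real_sqrt_pow2) simp
  have "\<delta>\<^sup>2 * K \<le> \<delta>\<^sup>2 * c"
    unfolding c_def by (intro mult_left_mono) auto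
  also have "\<dots> = \<epsilon> / 2"
    using c by (simp add: \<delta>_sq)
  finally have \<delta>K: "\<delta>\<^sup>2 * K \<le> \<epsilon> / 2" .
  have F: "finite F"
    unfolding F_def using vanish \<delta> by blast
  have "(\<lambda>n. sum (l2_term d (mult_op m (v n))) F) \<longlonglongrightarrow> (\<Sum>a\<in>F. (real (d a))\<^sup>2 * (cmod (m a * 0))\<^sup>2)"
    unfolding l2_term_def mult_op_def by (intro tendsto_intros lim)
  then have "\<forall>\<^sub>F n in sequentially. sum (l2_term d (mult_op m (v n))) F < \<epsilon> / 2"
    using \<epsilon> by (intro order_tendstoD(2)) auto
  then obtain N where N: "\<And>n. n \<ge> N \<Longrightarrow> sum (l2_term d (mult_op m (v n))) F < \<epsilon> / 2"
    unfolding eventually_sequentially by blast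
  have "l2_normsq d (mult_op m (v n)) < \<epsilon>" if "n \<ge> N" for n
  proof -
    have "l2_normsq d (mult_op m (v n)) \<le> sum (l2_term d (mult_op m (v n))) F + \<delta>\<^sup>2 * l2_normsq d (v n)"
      using l2_normsq_mult_op_le[OF v F, of m \<delta>] by (auto simp: F_def)
    also have "\<delta>\<^sup>2 * l2_normsq d (v n) \<le> \<delta>\<^sup>2 * K"
      by (rule mult_left_mono[OF bnd]) simp
    finally show ?thesis
      using N[OF that] \<delta>K by linarith
  qed
  then show "\<exists>N. \<forall>n\<ge>N. norm (l2_normsq d (mult_op m (v n)) - 0) < \<epsilon>"
    by (auto simp: abs_of_nonneg[OF l2_normsq_nonneg])
qed

lemma l2_bounded_pointwise_convergent_subseq:
  fixes xs :: "nat \<Rightarrow> 'a \<Rightarrow> complex"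
  assumes d: "\<And>a. d a \<ge> 1" and cnt: "countable (UNIV :: 'a set)"
    and xs: "\<And>n. xs n \<in> l2 d" and xs_B: "\<And>n. l2_norm d (xs n) \<le> B"
  shows "\<exists>r u. strict_mono r \<and> u \<in> l2 d \<and> l2_normsq d u \<le> B\<^sup>2 \<and> (\<forall>a. (\<lambda>n. xs (r n) a) \<longlonglongrightarrow> u a)"
proof -
  have normsq_B: "l2_normsq d (xs n) \<le> B\<^sup>2" for n
    using xs_B[of n] by (simp add: l2_norm_eq_sqrt sqrt_le_D)
  have bnd: "bounded (range (\<lambda>n. xs n a))" for a
    unfolding bounded_iff using cmod_le_l2_norm[OF xs d] xs_B order_trans by blast
  obtain r where r: "strict_mono r" and conv: "\<And>a. convergent (\<lambda>n. xs (r n) a)"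
    using pointwise_convergent_subseq[of xs, OF cnt bnd] by blast
  define u where "u a = lim (\<lambda>n. xs (r n) a)" for a
  have u_lim: "(\<lambda>n. xs (r n) a) \<longlonglongrightarrow> u a" for a
    using conv[of a] by (simp add: u_def convergent_LIMSEQ_iff)
  then have "u \<in> l2 d \<and> l2_normsq d u \<le> B\<^sup>2"
    using l2_pointwise_limit[of "\<lambda>n. xs (r n)" d "B\<^sup>2" u] xs normsq_B by blast
  then show ?thesis
    using r u_lim by blast
qed

lemma compact_operator_mult_op:
  assumes d: "\<And>a. d a \<ge> 1" and cnt: "countable (UNIV :: 'a set)"
    and vanish: "\<And>\<epsilon>. \<epsilon> > 0 \<Longrightarrow> finite {a :: 'a. \<epsilon> \<le> cmod (m a)}"
  shows "compact_operator d (mult_op m)"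
  unfolding compact_operator_def
proof (intro conjI ballI allI impI)
  have mult_l2: "mult_op m x \<in> l2 d" if "x \<in> l2 d" for x
    using l2_normsq_mult_op_le[OF that, of "{a. 1 \<le> cmod (m a)}" m 1] vanish by force
  fix x assume "x \<in> l2 d"
  then show "mult_op m x \<in> l2 d"
    by (rule mult_l2)
next
  fix xs :: "nat \<Rightarrow> 'a \<Rightarrow> complex" and B :: real
  assume "\<forall>n. xs n \<in> l2 d \<and> l2_norm d (xs n) \<le> B"
  then have xs: "\<And>n. xs n \<in> l2 d" and xs_B: "\<And>n. l2_norm d (xs n) \<le> B"
    by auto
  obtain r u where r: "strict_mono r" and u: "u \<in> l2 d" and u_B: "l2_normsq d u \<le> B\<^sup>2"
    and u_lim: "\<And>a. (\<lambda>n. xs (r n) a) \<longlonglongrightarrow> u a"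
    using l2_bounded_pointwise_convergent_subseq[where xs = xs, OF d cnt xs xs_B] by blast
  define v where "v n = xs (r n) - u" for n
  have v: "v n \<in> l2 d" and v_B: "l2_normsq d (v n) \<le> 2 * (B\<^sup>2 + B\<^sup>2)" for n
    using l2_diff[OF xs[of "r n"] u] xs_B[of "r n"] u_B unfolding v_def
    by (auto simp: l2_norm_eq_sqrt dest: sqrt_le_D)
  have v_lim: "(\<lambda>n. v n a) \<longlonglongrightarrow> 0" for a
    using tendsto_diff[OF u_lim tendsto_const, of a "u a"] by (simp add: v_def)
  have "(\<lambda>n. l2_normsq d (mult_op m (v n))) \<longlonglongrightarrow> 0"
    using vanish v v_B v_lim by (rule l2_normsq_mult_op_tendsto_zero)
  then have "(\<lambda>n. l2_norm d (mult_op m (xs (r n)) - mult_op m u)) \<longlonglongrightarrow> 0"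
    using tendsto_real_sqrt
    by (fastforce simp: l2_norm_eq_sqrt v_def mult_op_def fun_diff_def right_diff_distrib)
  moreover have "mult_op m u \<in> l2 d"
    using l2_normsq_mult_op_le[OF u, of "{a. 1 \<le> cmod (m a)}" m 1] vanish by force
  ultimately show "\<exists>r z. strict_mono r \<and> z \<in> l2 d \<and> (\<lambda>n. l2_norm d (mult_op m (xs (r n)) - z)) \<longlonglongrightarrow> 0"
    using r by blast
qed

lemma countable_if_finite_sublevels:
  fixes l :: "'a \<Rightarrow> nat"
  assumes "\<And>n. finite {a. l a \<le> n}"
  shows "countable (UNIV :: 'a set)"
proof -
  have "countable (\<Union>n. {a. l a \<le> n})"
    by (rule countable_UN) (simp_all add: countable_finite assms)
  moreover have "(\<Union>n. {a. l a \<le> n}) = UNIV"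
    by auto
  ultimately show ?thesis
    by simp
qed

definition resolvent_mult :: "('a \<Rightarrow> nat) \<Rightarrow> 'a \<Rightarrow> complex" where
  "resolvent_mult l a = 1 / (of_nat (l a) - \<i>)"

lemma norm_of_nat_minus_ii_ge: "max 1 (real n) \<le> cmod (of_nat n - \<i>)"
  using abs_Im_le_cmod[of "of_nat n - \<i>"] abs_Re_le_cmod[of "of_nat n - \<i>"] by simp

lemma resolvent_mult_inverse: "(of_nat (l a) - \<i>) * resolvent_mult l a = 1"
  using norm_of_nat_minus_ii_ge[of "l a"] by (auto simp: resolvent_mult_def)

lemma norm_resolvent_mult_le: "max 1 (real (l a)) * cmod (resolvent_mult l a) \<le> 1"
  using norm_of_nat_minus_ii_ge[of "l a"] by (simp add: resolvent_mult_def norm_divide divide_simps)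

lemma resolvent_mult_vanishes:
  assumes fin: "\<And>n. finite {a. l a \<le> n}" and \<epsilon>: "\<epsilon> > 0"
  shows "finite {a. \<epsilon> \<le> cmod (resolvent_mult l a)}"
proof (rule finite_subset[OF _ fin])
  show "{a. \<epsilon> \<le> cmod (resolvent_mult l a)} \<subseteq> {a. l a \<le> nat \<lceil>1 / \<epsilon>\<rceil>}"
  proof safe
    fix a assume "\<epsilon> \<le> cmod (resolvent_mult l a)"
    then have "\<epsilon> * real (l a) \<le> cmod (resolvent_mult l a) * max 1 (real (l a))"
      by (intro mult_mono) auto
    also have "\<dots> \<le> 1"
      using norm_resolvent_mult_le[of l a] by (simp add: mult.commute)
    finally have "real (l a) \<le> 1 / \<epsilon>"
      using \<epsilon> by (simp add: pos_le_divide_eq mult.commute)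
    also have "\<dots> \<le> real (nat \<lceil>1 / \<epsilon>\<rceil>)"
      by (rule real_nat_ceiling_ge)
    finally show "l a \<le> nat \<lceil>1 / \<epsilon>\<rceil>"
      by simp
  qed
qed

lemma mult_op_resolvent_in_Dt_dom:
  assumes d: "\<And>a. d a \<ge> 1" and fin: "\<And>n. finite {a. l a \<le> n}" and y: "y \<in> l2 d"
  shows "mult_op (resolvent_mult l) y \<in> Dt_dom d l"
proof -
  have "cmod (resolvent_mult l a) \<le> 1" and "real (l a) * cmod (resolvent_mult l a) \<le> 1" for a
  proof -
    have "1 * cmod (resolvent_mult l a) \<le> max 1 (real (l a)) * cmod (resolvent_mult l a)"
      and "real (l a) * cmod (resolvent_mult l a) \<le> max 1 (real (l a)) * cmod (resolvent_mult l a)"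
      by (intro mult_right_mono; simp)+
    with norm_resolvent_mult_le[of l a]
    show "cmod (resolvent_mult l a) \<le> 1" and "real (l a) * cmod (resolvent_mult l a) \<le> 1"
      by linarith+
  qed
  from this[THEN mult_right_mono, OF norm_ge_zero]
  have R: "cmod (mult_op (resolvent_mult l) y a) \<le> 1 * cmod (y a)"
    and DR: "cmod (diag_op l (mult_op (resolvent_mult l) y) a) \<le> 1 * cmod (y a)" for a
    by (simp_all add: mult_op_def diag_op_def norm_mult mult.assoc)
  show ?thesis
    using l2_pointwise_le[OF y R] l2_pointwise_le[OF y DR] by (simp add: Dt_dom_eq[OF d fin])
qed

lemma has_compact_resolvent_Dt:
  assumes d: "\<And>a. d a \<ge> 1" and fin: "\<And>n. finite {a. l a \<le> n}"
  shows "has_compact_resolvent d (Dt_dom d l) (Dt d l)"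
  unfolding has_compact_resolvent_def
proof (intro exI[of _ "mult_op (resolvent_mult l)"] conjI ballI)
  note Dt = Dt_eq_diag_op[OF d fin] and R = mult_op_resolvent_in_Dt_dom[OF d fin]
  fix y assume y: "y \<in> l2 d"
  show "mult_op (resolvent_mult l) y \<in> Dt_dom d l"
    by (rule R[OF y])
  have "Dt d l (mult_op (resolvent_mult l) y) a - \<i> * mult_op (resolvent_mult l) y a
      = ((of_nat (l a) - \<i>) * resolvent_mult l a) * y a" for a
    unfolding Dt[OF R[OF y]] by (simp add: diag_op_def mult_op_def algebra_simps)
  then show "(\<lambda>a. Dt d l (mult_op (resolvent_mult l) y) a - \<i> * mult_op (resolvent_mult l) y a) = y"
    by (simp only: resolvent_mult_inverse mult_1)
next
  note Dt = Dt_eq_diag_op[OF d fin]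
  fix x assume x: "x \<in> Dt_dom d l"
  show "mult_op (resolvent_mult l) (\<lambda>a. Dt d l x a - \<i> * x a) = x"
  proof
    fix a
    have "mult_op (resolvent_mult l) (\<lambda>a. Dt d l x a - \<i> * x a) a
        = ((of_nat (l a) - \<i>) * resolvent_mult l a) * x a"
      unfolding Dt[OF x] by (simp add: diag_op_def mult_op_def algebra_simps)
    then show "mult_op (resolvent_mult l) (\<lambda>a. Dt d l x a - \<i> * x a) a = x a"
      by (simp only: resolvent_mult_inverse mult_1)
  qed
next
  show "compact_operator d (mult_op (resolvent_mult l))"
    by (rule compact_operator_mult_op[OF d countable_if_finite_sublevels[OF fin]
          resolvent_mult_vanishes[OF fin]])
qed

section \<open>Bounded commutators with the fusion algebra\<close>

lemma fusion_dim_ge_1: "cqg_fusion_data e cj d N \<Longrightarrow> d a \<ge> 1"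
  unfolding cqg_fusion_data_def by (elim conjE) blast

lemma fusion_dim_conj: "cqg_fusion_data e cj d N \<Longrightarrow> d (cj a) = d a"
  unfolding cqg_fusion_data_def by (elim conjE) blast

lemma finite_fusion_support: "cqg_fusion_data e cj d N \<Longrightarrow> finite {c. N a b c \<noteq> 0}"
  unfolding cqg_fusion_data_def by (elim conjE) blast

lemma fusion_frobenius: "cqg_fusion_data e cj d N \<Longrightarrow> N a b c = N (cj a) c b"
  unfolding cqg_fusion_data_def by (elim conjE) blast

lemma fusion_dim_product:
  assumes "cqg_fusion_data e cj d N"
  shows "(\<Sum>c\<in>{c. N a b c \<noteq> 0}. real (N a b c) * real (d c)) = real (d a) * real (d b)"
proof -
  have "d a * d b = (\<Sum>c\<in>{c. N a b c \<noteq> 0}. N a b c * d c)"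
    using assms unfolding cqg_fusion_data_def by (elim conjE) blast
  then have "real (d a * d b) = real (\<Sum>c\<in>{c. N a b c \<noteq> 0}. N a b c * d c)"
    by (rule arg_cong)
  then show ?thesis
    by (simp add: of_nat_sum)
qed

lemma finite_fusion_support_middle:
  assumes "cqg_fusion_data e cj d N"
  shows "finite {b. N a b c \<noteq> 0}"
proof -
  have "{b. N a b c \<noteq> 0} = {b. N (cj a) c b \<noteq> 0}"
    by (simp add: fusion_frobenius[OF assms, of a _ c])
  then show ?thesis
    using finite_fusion_support[OF assms, of "cj a" c] by simp
qed

lemma fusion_dim_product_middle:
  assumes fd: "cqg_fusion_data e cj d N"
  shows "(\<Sum>b\<in>{b. N a b c \<noteq> 0}. real (N a b c) * real (d b)) = real (d a) * real (d c)"
  using fusion_dim_product[OF fd, of "cj a" c]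
  by (simp add: fusion_frobenius[OF fd, of a] fusion_dim_conj[OF fd])

lemma fusion_dim_le:
  assumes fd: "cqg_fusion_data e cj d N" and "N a b c \<noteq> 0"
  shows "real (d c) \<le> real (d a) * real (d b)"
proof -
  have "real (d c) \<le> real (N a b c) * real (d c)"
    using assms(2) by (simp add: mult_le_cancel_right1)
  also have "\<dots> \<le> (\<Sum>c\<in>{c. N a b c \<noteq> 0}. real (N a b c) * real (d c))"
    using assms(2) finite_fusion_support[OF fd] by (intro member_le_sum) auto
  also have "\<dots> = real (d a) * real (d b)"
    by (rule fusion_dim_product[OF fd])
  finally show ?thesis .
qed

lemma weighted_Cauchy_Schwarz_sum:
  fixes w z :: "'i \<Rightarrow> real"
  assumes "\<And>i. i \<in> I \<Longrightarrow> w i \<ge> 0"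
  shows "(\<Sum>i\<in>I. w i * z i)\<^sup>2 \<le> (\<Sum>i\<in>I. w i) * (\<Sum>i\<in>I. w i * (z i)\<^sup>2)"
proof -
  have "(\<Sum>i\<in>I. sqrt (w i) * (sqrt (w i) * z i))\<^sup>2
      \<le> (\<Sum>i\<in>I. (sqrt (w i))\<^sup>2) * (\<Sum>i\<in>I. (sqrt (w i) * z i)\<^sup>2)"
    by (rule Cauchy_Schwarz_ineq_sum)
  also have "(\<Sum>i\<in>I. sqrt (w i) * (sqrt (w i) * z i)) = (\<Sum>i\<in>I. w i * z i)"
    using assms by (intro sum.cong) (auto simp: mult.assoc[symmetric])
  also have "(\<Sum>i\<in>I. (sqrt (w i))\<^sup>2) = (\<Sum>i\<in>I. w i)"
    using assms by (intro sum.cong) auto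
  also have "(\<Sum>i\<in>I. (sqrt (w i) * z i)\<^sup>2) = (\<Sum>i\<in>I. w i * (z i)\<^sup>2)"
    using assms by (intro sum.cong) (auto simp: power_mult_distrib)
  finally show ?thesis .
qed

lemma fusion_kernel_row_le:
  assumes fd: "cqg_fusion_data e cj d N"
  shows "(real (d c))\<^sup>2 * (\<Sum>b\<in>{b. N \<alpha> b c \<noteq> 0}. real (N \<alpha> b c) * X b)\<^sup>2
    \<le> real (d \<alpha>) * (\<Sum>b\<in>{b. N \<alpha> b c \<noteq> 0}. (X b)\<^sup>2 / real (d b) * (real (N \<alpha> b c) * real (d c) ^ 3))"
proof -
  \<comment> \<open>Cauchy-Schwarz with the weights N(alpha,b,c) d(b), whose sum is d(alpha) d(c).\<close>
  let ?B = "{b. N \<alpha> b c \<noteq> 0}"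
  have d_nz: "d b \<noteq> 0" for b
    using fusion_dim_ge_1[OF fd, of b] by simp
  have "(\<Sum>b\<in>?B. real (N \<alpha> b c) * X b)\<^sup>2
      = (\<Sum>b\<in>?B. (real (N \<alpha> b c) * real (d b)) * (X b / real (d b)))\<^sup>2"
    by (simp add: d_nz)
  also have "\<dots> \<le> (\<Sum>b\<in>?B. real (N \<alpha> b c) * real (d b))
      * (\<Sum>b\<in>?B. (real (N \<alpha> b c) * real (d b)) * (X b / real (d b))\<^sup>2)"
    by (rule weighted_Cauchy_Schwarz_sum) simp
  also have "\<dots> = real (d \<alpha>) * real (d c) * (\<Sum>b\<in>?B. real (N \<alpha> b c) * (X b)\<^sup>2 / real (d b))"
    unfolding fusion_dim_product_middle[OF fd]
    by (intro arg_cong[where f = "(*) _"] sum.cong refl) (simp add: d_nz power2_eq_square)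
  finally have "(real (d c))\<^sup>2 * (\<Sum>b\<in>?B. real (N \<alpha> b c) * X b)\<^sup>2
      \<le> (real (d c))\<^sup>2 * (real (d \<alpha>) * real (d c) * (\<Sum>b\<in>?B. real (N \<alpha> b c) * (X b)\<^sup>2 / real (d b)))"
    by (rule mult_left_mono) simp
  also have "\<dots> = real (d \<alpha>) * (\<Sum>b\<in>?B. (X b)\<^sup>2 / real (d b) * (real (N \<alpha> b c) * real (d c) ^ 3))"
    unfolding sum_distrib_left by (intro sum.cong refl) (simp add: power2_eq_square power3_eq_cube)
  finally show ?thesis .
qed

lemma fusion_kernel_column_le:
  assumes fd: "cqg_fusion_data e cj d N" and G: "finite G"
  shows "(\<Sum>c\<in>G. real (N \<alpha> b c) * real (d c) ^ 3) \<le> (real (d \<alpha>) * real (d b)) ^ 3"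
proof -
  let ?C = "{c. N \<alpha> b c \<noteq> 0}"
  have "(\<Sum>c\<in>G. real (N \<alpha> b c) * real (d c) ^ 3) = (\<Sum>c\<in>G \<inter> ?C. real (N \<alpha> b c) * real (d c) ^ 3)"
    by (rule sum.mono_neutral_right[OF G]) auto
  also have "\<dots> \<le> (\<Sum>c\<in>?C. real (N \<alpha> b c) * real (d c) ^ 3)"
    by (rule sum_mono2[OF finite_fusion_support[OF fd]]) auto
  also have "\<dots> \<le> (\<Sum>c\<in>?C. real (N \<alpha> b c) * real (d c) * (real (d \<alpha>) * real (d b))\<^sup>2)"
  proof (rule sum_mono)
    fix c assume "c \<in> ?C"
    then have "(real (d c))\<^sup>2 \<le> (real (d \<alpha>) * real (d b))\<^sup>2"
      using fusion_dim_le[OF fd] by (intro power_mono) auto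
    then show "real (N \<alpha> b c) * real (d c) ^ 3 \<le> real (N \<alpha> b c) * real (d c) * (real (d \<alpha>) * real (d b))\<^sup>2"
      by (simp add: power3_eq_cube power2_eq_square mult_left_mono mult.assoc)
  qed
  also have "\<dots> = (\<Sum>c\<in>?C. real (N \<alpha> b c) * real (d c)) * (real (d \<alpha>) * real (d b))\<^sup>2"
    by (rule sum_distrib_right[symmetric])
  also have "\<dots> = (real (d \<alpha>) * real (d b)) ^ 3"
    unfolding fusion_dim_product[OF fd] by (simp add: power3_eq_cube power2_eq_square)
  finally show ?thesis .
qed

lemma sum_fusion_kernel_le:
  assumes fd: "cqg_fusion_data e cj d N" and G: "finite G"
  shows "(\<Sum>c\<in>G. (real (d c))\<^sup>2 * (\<Sum>b\<in>{b. N \<alpha> b c \<noteq> 0}. real (N \<alpha> b c) * X b)\<^sup>2)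
    \<le> real (d \<alpha>) ^ 4 * (\<Sum>b\<in>(\<Union>c\<in>G. {b. N \<alpha> b c \<noteq> 0}). (real (d b))\<^sup>2 * (X b)\<^sup>2)"
proof -
  define H where "H = (\<Union>c\<in>G. {b. N \<alpha> b c \<noteq> 0})"
  define T where "T c b = (X b)\<^sup>2 / real (d b) * (real (N \<alpha> b c) * real (d c) ^ 3)" for c b
  have H: "finite H"
    unfolding H_def by (intro finite_UN_I G finite_fusion_support_middle[OF fd])
  have d_pos: "real (d b) > 0" for b
    using fusion_dim_ge_1[OF fd, of b] by simp
  have column: "(\<Sum>c\<in>G. T c b) \<le> real (d \<alpha>) ^ 3 * ((real (d b))\<^sup>2 * (X b)\<^sup>2)" for b
  proof -
    have "(\<Sum>c\<in>G. T c b) = (X b)\<^sup>2 / real (d b) * (\<Sum>c\<in>G. real (N \<alpha> b c) * real (d c) ^ 3)"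
      unfolding T_def by (rule sum_distrib_left[symmetric])
    also have "\<dots> \<le> (X b)\<^sup>2 / real (d b) * (real (d \<alpha>) * real (d b)) ^ 3"
      using d_pos[of b] by (intro mult_left_mono fusion_kernel_column_le[OF fd G]) auto
    also have "\<dots> = real (d \<alpha>) ^ 3 * ((real (d b))\<^sup>2 * (X b)\<^sup>2)"
      using d_pos[of b] by (simp add: power3_eq_cube power2_eq_square field_simps)
    finally show ?thesis .
  qed
  have "(\<Sum>c\<in>G. (real (d c))\<^sup>2 * (\<Sum>b\<in>{b. N \<alpha> b c \<noteq> 0}. real (N \<alpha> b c) * X b)\<^sup>2)
      \<le> (\<Sum>c\<in>G. real (d \<alpha>) * (\<Sum>b\<in>{b. N \<alpha> b c \<noteq> 0}. T c b))"
    unfolding T_def by (intro sum_mono fusion_kernel_row_le[OF fd])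
  also have "\<dots> = real (d \<alpha>) * (\<Sum>c\<in>G. \<Sum>b\<in>H. T c b)"
  proof -
    have "(\<Sum>b\<in>{b. N \<alpha> b c \<noteq> 0}. T c b) = (\<Sum>b\<in>H. T c b)" if "c \<in> G" for c
      by (rule sum.mono_neutral_left[OF H]) (use that in \<open>auto simp: H_def T_def\<close>)
    then show ?thesis
      by (simp only: sum_distrib_left[symmetric] cong: sum.cong)
  qed
  also have "\<dots> = real (d \<alpha>) * (\<Sum>b\<in>H. \<Sum>c\<in>G. T c b)"
    by (rule arg_cong[where f = "(*) _"], rule sum.swap)
  also have "\<dots> \<le> real (d \<alpha>) * (\<Sum>b\<in>H. real (d \<alpha>) ^ 3 * ((real (d b))\<^sup>2 * (X b)\<^sup>2))"
    by (intro mult_left_mono sum_mono column) simp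
  also have "\<dots> = real (d \<alpha>) ^ 4 * (\<Sum>b\<in>H. (real (d b))\<^sup>2 * (X b)\<^sup>2)"
    by (simp add: sum_distrib_left[symmetric] power_numeral_reduce)
  finally show ?thesis
    unfolding H_def .
qed

lemma l2_fusion_kernel_le:
  assumes fd: "cqg_fusion_data e cj d N" and x: "x \<in> l2 d"
    and y: "\<And>c. cmod (y c) \<le> K * (\<Sum>b\<in>{b. N \<alpha> b c \<noteq> 0}. real (N \<alpha> b c) * cmod (x b))"
  shows "y \<in> l2 d \<and> l2_normsq d y \<le> K\<^sup>2 * real (d \<alpha>) ^ 4 * l2_normsq d x"
proof (rule l2_if_sum_l2_term_bounded)
  fix G :: "'a set" assume G: "finite G"
  define X where "X b = cmod (x b)" for b
  have "l2_term d y c \<le> K\<^sup>2 * ((real (d c))\<^sup>2 * (\<Sum>b\<in>{b. N \<alpha> b c \<noteq> 0}. real (N \<alpha> b c) * X b)\<^sup>2)" for c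
  proof -
    have "(cmod (y c))\<^sup>2 \<le> (K * (\<Sum>b\<in>{b. N \<alpha> b c \<noteq> 0}. real (N \<alpha> b c) * X b))\<^sup>2"
      using y[of c] unfolding X_def by (intro power_mono) auto
    from mult_left_mono[OF this, of "(real (d c))\<^sup>2"] show ?thesis
      by (simp add: l2_term_def power_mult_distrib ac_simps)
  qed
  then have "sum (l2_term d y) G
      \<le> (\<Sum>c\<in>G. K\<^sup>2 * ((real (d c))\<^sup>2 * (\<Sum>b\<in>{b. N \<alpha> b c \<noteq> 0}. real (N \<alpha> b c) * X b)\<^sup>2))"
    by (rule sum_mono)
  also have "\<dots> = K\<^sup>2 * (\<Sum>c\<in>G. (real (d c))\<^sup>2 * (\<Sum>b\<in>{b. N \<alpha> b c \<noteq> 0}. real (N \<alpha> b c) * X b)\<^sup>2)"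
    by (rule sum_distrib_left[symmetric])
  also have "\<dots> \<le> K\<^sup>2 * (real (d \<alpha>) ^ 4 * sum (l2_term d x) (\<Union>c\<in>G. {b. N \<alpha> b c \<noteq> 0}))"
    unfolding X_def l2_term_def
    by (intro mult_left_mono sum_fusion_kernel_le[OF fd G] zero_le_power2)
  also have "\<dots> \<le> K\<^sup>2 * (real (d \<alpha>) ^ 4 * l2_normsq d x)"
    by (intro mult_left_mono sum_l2_term_le_l2_normsq[OF x] finite_UN_I G
        finite_fusion_support_middle[OF fd] zero_le_power2 zero_le_power) simp
  finally show "sum (l2_term d y) G \<le> K\<^sup>2 * real (d \<alpha>) ^ 4 * l2_normsq d x"
    by (simp add: mult.assoc)
qed

lemma fusion_pi_in_l2:
  assumes fd: "cqg_fusion_data e cj d N" and f: "f \<in> fin_supp" and x: "x \<in> l2 d"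
  shows "fusion_pi N f x \<in> l2 d"
proof -
  define g where "g a = (\<lambda>c. f a * (\<Sum>b\<in>{b. N a b c \<noteq> 0}. of_nat (N a b c) * x b))" for a
  have "g a \<in> l2 d" for a
  proof (rule l2_fusion_kernel_le[OF fd x, THEN conjunct1])
    fix c
    have "cmod (\<Sum>b\<in>{b. N a b c \<noteq> 0}. of_nat (N a b c) * x b) \<le> (\<Sum>b\<in>{b. N a b c \<noteq> 0}. real (N a b c) * cmod (x b))"
      using norm_sum[of "\<lambda>b. of_nat (N a b c) * x b"] by (simp add: norm_mult)
    then show "cmod (g a c) \<le> cmod (f a) * (\<Sum>b\<in>{b. N a b c \<noteq> 0}. real (N a b c) * cmod (x b))"
      unfolding g_def norm_mult by (rule mult_left_mono) simp
  qed
  moreover have "cmod (fusion_pi N f x c) \<le> (\<Sum>a\<in>{a. f a \<noteq> 0}. cmod (g a c))" for c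
    unfolding fusion_pi_def g_def by (rule norm_sum)
  ultimately show ?thesis
    using l2_sum_le[of "{a. f a \<noteq> 0}" g d "fusion_pi N f x"] f by (simp add: fin_supp_def)
qed

lemma diag_op_fusion_pi_commutator:
  "diag_op l (fusion_pi N f x) c - fusion_pi N f (diag_op l x) c
    = (\<Sum>a\<in>{a. f a \<noteq> 0}. f a * (\<Sum>b\<in>{b. N a b c \<noteq> 0}.
        of_nat (N a b c) * (of_nat (l c) - of_nat (l b)) * x b))"
  unfolding diag_op_def fusion_pi_def sum_distrib_left sum_subtractf[symmetric] right_diff_distrib[symmetric]
  by (intro sum.cong refl) (simp add: algebra_simps)

lemma length_diff_le:
  assumes fd: "cqg_fusion_data e cj d N" and l: "length_function e cj N l" and N: "N a b c \<noteq> 0"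
  shows "\<bar>real (l c) - real (l b)\<bar> \<le> real (l a)"
proof -
  have tri: "l z \<le> l x + l y" if "N x y z \<noteq> 0" for x y z
    using l that by (simp add: length_function_def)
  have "N (cj a) c b \<noteq> 0"
    using N by (simp add: fusion_frobenius[OF fd, of a b c])
  then have "l b \<le> l a + l c"
    using tri l by (fastforce simp: length_function_def)
  moreover have "l c \<le> l a + l b"
    by (rule tri[OF N])
  ultimately show ?thesis
    by linarith
qed

lemma norm_commutator_kernel_le:
  assumes fd: "cqg_fusion_data e cj d N" and l: "length_function e cj N l"
  shows "cmod (\<Sum>b\<in>{b. N a b c \<noteq> 0}. of_nat (N a b c) * (of_nat (l c) - of_nat (l b)) * x b)
    \<le> real (l a) * (\<Sum>b\<in>{b. N a b c \<noteq> 0}. real (N a b c) * cmod (x b))"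
proof -
  have summand: "cmod (of_nat (N a b c) * (of_nat (l c) - of_nat (l b)) * x b)
      \<le> real (l a) * (real (N a b c) * cmod (x b))" if "b \<in> {b. N a b c \<noteq> 0}" for b
  proof -
    have "cmod (of_nat (l c) - of_nat (l b) :: complex) = \<bar>real (l c) - real (l b)\<bar>"
      by (metis norm_of_real of_real_diff of_real_of_nat_eq)
    then have "cmod (of_nat (N a b c) * (of_nat (l c) - of_nat (l b)) * x b)
        = \<bar>real (l c) - real (l b)\<bar> * (real (N a b c) * cmod (x b))"
      by (simp add: norm_mult)
    also have "\<dots> \<le> real (l a) * (real (N a b c) * cmod (x b))"
      using length_diff_le[OF fd l] that by (intro mult_right_mono) auto
    finally show ?thesis .
  qed
  have "cmod (\<Sum>b\<in>{b. N a b c \<noteq> 0}. of_nat (N a b c) * (of_nat (l c) - of_nat (l b)) * x b)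
      \<le> (\<Sum>b\<in>{b. N a b c \<noteq> 0}. cmod (of_nat (N a b c) * (of_nat (l c) - of_nat (l b)) * x b))"
    by (rule norm_sum)
  also have "\<dots> \<le> (\<Sum>b\<in>{b. N a b c \<noteq> 0}. real (l a) * (real (N a b c) * cmod (x b)))"
    by (rule sum_mono[OF summand])
  also have "\<dots> = real (l a) * (\<Sum>b\<in>{b. N a b c \<noteq> 0}. real (N a b c) * cmod (x b))"
    by (rule sum_distrib_left[symmetric])
  finally show ?thesis .
qed

lemma l2_fusion_commutator_le:
  assumes fd: "cqg_fusion_data e cj d N" and l: "length_function e cj N l"
    and f: "f \<in> fin_supp" and x: "x \<in> l2 d"
  shows "(\<lambda>c. diag_op l (fusion_pi N f x) c - fusion_pi N f (diag_op l x) c) \<in> l2 d \<and>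
    l2_normsq d (\<lambda>c. diag_op l (fusion_pi N f x) c - fusion_pi N f (diag_op l x) c)
      \<le> real (card {a. f a \<noteq> 0}) * (\<Sum>a\<in>{a. f a \<noteq> 0}. (cmod (f a) * real (l a))\<^sup>2 * real (d a) ^ 4)
        * l2_normsq d x"
proof -
  define A where "A = {a. f a \<noteq> 0}"
  define K where "K a = cmod (f a) * real (l a)" for a
  define g where "g a = (\<lambda>c. f a * (\<Sum>b\<in>{b. N a b c \<noteq> 0}.
      of_nat (N a b c) * (of_nat (l c) - of_nat (l b)) * x b))" for a
  have g: "g a \<in> l2 d \<and> l2_normsq d (g a) \<le> (K a)\<^sup>2 * real (d a) ^ 4 * l2_normsq d x" for a
  proof (rule l2_fusion_kernel_le[OF fd x])
    show "cmod (g a c) \<le> K a * (\<Sum>b\<in>{b. N a b c \<noteq> 0}. real (N a b c) * cmod (x b))" for c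
      using mult_left_mono[OF norm_commutator_kernel_le[OF fd l], of "cmod (f a)" a c x]
      by (simp add: g_def K_def norm_mult mult.assoc)
  qed
  have "cmod (diag_op l (fusion_pi N f x) c - fusion_pi N f (diag_op l x) c) \<le> (\<Sum>a\<in>A. cmod (g a c))" for c
    unfolding diag_op_fusion_pi_commutator g_def A_def by (rule norm_sum)
  then have comm: "(\<lambda>c. diag_op l (fusion_pi N f x) c - fusion_pi N f (diag_op l x) c) \<in> l2 d \<and>
      l2_normsq d (\<lambda>c. diag_op l (fusion_pi N f x) c - fusion_pi N f (diag_op l x) c)
        \<le> real (card A) * (\<Sum>a\<in>A. l2_normsq d (g a))"
    using l2_sum_le[of A g d] f g by (simp add: A_def fin_supp_def)
  have "real (card A) * (\<Sum>a\<in>A. l2_normsq d (g a))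
      \<le> real (card A) * (\<Sum>a\<in>A. (K a)\<^sup>2 * real (d a) ^ 4 * l2_normsq d x)"
    using g by (intro mult_left_mono sum_mono) auto
  also have "\<dots> = real (card A) * (\<Sum>a\<in>A. (K a)\<^sup>2 * real (d a) ^ 4) * l2_normsq d x"
    by (simp add: sum_distrib_right mult.assoc)
  finally show ?thesis
    using comm unfolding A_def K_def by linarith
qed

lemma bounded_commutator_Dt:
  assumes fd: "cqg_fusion_data e cj d N" and pl: "proper_length_function e cj N l"
    and f: "f \<in> fin_supp"
  shows "bounded_commutator d (Dt_dom d l) (Dt d l) (fusion_pi N f)"
proof -
  have d: "\<And>a. d a \<ge> 1" and fin: "\<And>n. finite {a. l a \<le> n}" and l: "length_function e cj N l"
    using fusion_dim_ge_1[OF fd] pl by (auto simp: proper_length_function_def)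
  note dom = Dt_dom_eq[OF d fin] and Dt = Dt_eq_diag_op[OF d fin]
  define C where "C = real (card {a. f a \<noteq> 0}) * (\<Sum>a\<in>{a. f a \<noteq> 0}. (cmod (f a) * real (l a))\<^sup>2 * real (d a) ^ 4)"
  define comm where "comm x = (\<lambda>c. diag_op l (fusion_pi N f x) c - fusion_pi N f (diag_op l x) c)" for x
  have comm: "comm x \<in> l2 d \<and> l2_normsq d (comm x) \<le> C * l2_normsq d x" if "x \<in> l2 d" for x
    unfolding comm_def C_def by (rule l2_fusion_commutator_le[OF fd l f that])
  have pres: "fusion_pi N f x \<in> Dt_dom d l" and eq: "Dt d l (fusion_pi N f x) - fusion_pi N f (Dt d l x) = comm x"
    if x: "x \<in> Dt_dom d l" for x
  proof -
    have x_l2: "x \<in> l2 d" and dx_l2: "diag_op l x \<in> l2 d"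
      using x by (simp_all add: dom)
    have "diag_op l (fusion_pi N f x) = (\<lambda>c. fusion_pi N f (diag_op l x) c + comm x c)"
      by (simp add: comm_def)
    also have "\<dots> \<in> l2 d"
      by (rule l2_add[OF fusion_pi_in_l2[OF fd f dx_l2] comm[OF x_l2, THEN conjunct1]])
    finally show pres: "fusion_pi N f x \<in> Dt_dom d l"
      using fusion_pi_in_l2[OF fd f x_l2] by (simp add: dom)
    show "Dt d l (fusion_pi N f x) - fusion_pi N f (Dt d l x) = comm x"
      by (simp add: Dt[OF pres] Dt[OF x] comm_def fun_diff_def)
  qed
  have "l2_norm d (Dt d l (fusion_pi N f x) - fusion_pi N f (Dt d l x)) \<le> sqrt C * l2_norm d x"
    if x: "x \<in> Dt_dom d l" for x
  proof -
    have "l2_normsq d (comm x) \<le> C * l2_normsq d x"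
      using comm x by (simp add: dom)
    then show ?thesis
      unfolding eq[OF x] l2_norm_eq_sqrt real_sqrt_mult[symmetric] by (rule real_sqrt_le_mono)
  qed
  then show ?thesis
    unfolding bounded_commutator_def using pres by blast
qed

theorem lemma3p2:
  fixes e :: 'a and cj :: "'a \<Rightarrow> 'a" and d :: "'a \<Rightarrow> nat"
    and N :: "'a \<Rightarrow> 'a \<Rightarrow> 'a \<Rightarrow> nat" and l :: "'a \<Rightarrow> nat"
  assumes "cqg_fusion_data e cj d N"
    and "proper_length_function e cj N l"
  shows "self_adjoint d (Dt_dom d l) (Dt d l) \<and>
         has_compact_resolvent d (Dt_dom d l) (Dt d l) \<and>
         (\<forall>f\<in>fusion_algebra. bounded_commutator d (Dt_dom d l) (Dt d l) (fusion_pi N f))"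
proof -
  have d: "\<And>a. d a \<ge> 1"
    by (rule fusion_dim_ge_1[OF assms(1)])
  have fin: "\<And>n. finite {a. l a \<le> n}"
    using assms(2) by (simp add: proper_length_function_def)
  show ?thesis
    using self_adjoint_Dt[of d l, OF d fin] has_compact_resolvent_Dt[of d l, OF d fin]
      bounded_commutator_Dt[OF assms] by blast
qed

end
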